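(* Let $A(\cdot),B(\cdot),C(\cdot)$ be real, piecewise-continuous, $T$-periodic matrix functions (sizes $n\times n$, $n\times m$, $k\times n$) with $(A,B)$ controllable and $(C,A)$ observable, and let $\alpha(\cdot)>0$ be $T$-periodic. Let $P(t)=P(t+T)\succ0$ satisfy $$\dot P(t)= A(t)P(t)+P(t)A(t)^\top+\alpha(t)P(t)+\frac{1}{\alpha(t)}B(t)B(t)^\top,$$ and let $Q(t)=Q(t+T)\succ0$ satisfy $$-\dot Q(t)=Q(t)A(t)+A(t)^\top Q(t)+\alpha(t)Q(t)+C(t)^\top C(t).$$ Then $$\operatorname{size}(\mathcal{E}_\alpha)=\frac1T\int_0^T\frac{\mathrm{trace}\big(B(t)^\top Q(t)B(t)\big)}{\alpha(t)}\,dt.$$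
   Context: $\mathcal{E}_\alpha(t)=\{\mathrm{x}\in\mathbb{R}^n:\mathrm{x}^\top P(t)^{-1}\mathrm{x}\le1\}$ is the minimal periodic inescapable ellipsoid associated with $\alpha$ for the system $\dot x=A(t)x+B(t)w$, $z=C(t)x$, $\|w(t)\|\le1$, where $P$ is the periodic solution above. Its size is defined as $\operatorname{size}(\mathcal{E}_\alpha)=\frac1T\int_0^T\mathrm{trace}\big(C(t)P(t)C(t)^\top\big)\,dt$. *)

theory Defs
  imports "HOL-Analysis.Analysis"
begin

definition pw_continuous :: "(real \<Rightarrow> 'a::real_normed_vector) \<Rightarrow> bool" where
  "pw_continuous f \<longleftrightarrow>
     (\<forall>a b. \<exists>S. finite S \<and> continuous_on ({a..b} - S) f \<and>
        (\<forall>s\<in>S. (\<exists>l. (f \<longlongrightarrow> l) (at_left s)) \<and> (\<exists>r. (f \<longlongrightarrow> r) (at_right s))))"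

definition periodic :: "real \<Rightarrow> (real \<Rightarrow> 'a) \<Rightarrow> bool" where
  "periodic T f \<longleftrightarrow> (\<forall>t. f (t + T) = f t)"

text \<open>x is a (Caratheodory-type) solution of x' = F t (x t): continuous everywhere and
  differentiable with the prescribed derivative except at finitely many points of every
  bounded interval (the discontinuity points of the piecewise continuous data).\<close>
definition solves_ode :: "(real \<Rightarrow> 'a::real_normed_vector) \<Rightarrow> (real \<Rightarrow> 'a \<Rightarrow> 'a) \<Rightarrow> bool" where
  "solves_ode x F \<longleftrightarrow> continuous_on UNIV x \<and>
     (\<forall>a b. \<exists>S. finite S \<and> (\<forall>t\<in>{a..b} - S. (x has_vector_derivative F t (x t)) (at t)))"

definition controllable ::
  "(real \<Rightarrow> real^'n^'n) \<Rightarrow> (real \<Rightarrow> real^'m^'n) \<Rightarrow> bool" where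
  "controllable A B \<longleftrightarrow>
     (\<forall>t0 (x0::real^'n) x1. \<exists>t1>t0. \<exists>(u::real \<Rightarrow> real^'m) x.
        pw_continuous u \<and> solves_ode x (\<lambda>t y. A t *v y + B t *v u t) \<and>
        x t0 = x0 \<and> x t1 = x1)"

definition observable ::
  "(real \<Rightarrow> real^'n^'k) \<Rightarrow> (real \<Rightarrow> real^'n^'n) \<Rightarrow> bool" where
  "observable C A \<longleftrightarrow>
     (\<forall>t0. \<exists>t1>t0. \<forall>x::real \<Rightarrow> real^'n.
        solves_ode x (\<lambda>t y. A t *v y) \<and> (\<forall>t\<in>{t0..t1}. C t *v x t = 0) \<longrightarrow> x t0 = 0)"

definition pos_def :: "real^'n^'n \<Rightarrow> bool" where
  "pos_def M \<longleftrightarrow> transpose M = M \<and> (\<forall>x. x \<noteq> 0 \<longrightarrow> x \<bullet> (M *v x) > 0)"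

text \<open>size of the ellipsoid {x. x^T P(t)^{-1} x \<le> 1}: (1/T) \<integral>_0^T trace(C P C^T).\<close>
definition ellipsoid_size ::
  "real \<Rightarrow> (real \<Rightarrow> real^'n^'k) \<Rightarrow> (real \<Rightarrow> real^'n^'n) \<Rightarrow> real" where
  "ellipsoid_size T C P = (1 / T) * integral {0..T} (\<lambda>t. trace (C t ** P t ** transpose (C t)))"

end

theory Submission
  imports Defs
begin

text \<open>The two Lyapunov equations give, by cyclicity of the trace,
  \<open>d/dt trace (Q P) = trace (B\<^sup>T Q B) / \<alpha> - trace (C P C\<^sup>T)\<close>:
  the terms in \<open>A\<close> and \<open>\<alpha>\<close> cancel. Integrating over one period, the left-hand side
  vanishes because \<open>P\<close> and \<open>Q\<close> are \<open>T\<close>-periodic. Controllability, observability and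
  positive definiteness only serve to guarantee that \<open>P\<close> and \<open>Q\<close> exist; the identity
  itself does not use them.\<close>

lemma trace_scaleR: "trace (c *\<^sub>R (M::real^'n^'n)) = c * trace M"
  by (simp add: trace_def sum_distrib_left)

lemma trace_uminus: "trace (- (M::real^'n^'n)) = - trace M"
  by (simp add: trace_def sum_negf)

lemma matrix_add_rdistrib: "((X::real^'n^'m) + Y) ** (Z::real^'p^'n) = X ** Z + Y ** Z"
  by (simp add: matrix_matrix_mult_def vec_eq_iff distrib_right sum.distrib)

lemma matrix_diff_rdistrib: "((X::real^'n^'m) - Y) ** (Z::real^'p^'n) = X ** Z - Y ** Z"
  by (simp add: matrix_matrix_mult_def vec_eq_iff left_diff_distrib sum_subtractf)

lemma matrix_uminus_left: "(- (X::real^'n^'m)) ** (Z::real^'p^'n) = - (X ** Z)"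
  by (simp add: matrix_matrix_mult_def vec_eq_iff sum_negf)

lemma bounded_bilinear_trace_matrix_mult:
  "bounded_bilinear (\<lambda>(X::real^'n^'n) Y. trace (X ** Y))"
proof -
  have "bilinear (\<lambda>(X::real^'n^'n) Y. trace (X ** Y))"
    unfolding bilinear_def
  proof (intro allI conjI)
    fix Y :: "real^'n^'n"
    show "linear (\<lambda>X. trace (X ** Y))"
      by (rule linearI)
        (simp_all add: matrix_add_rdistrib trace_add trace_scaleR scalar_matrix_assoc[symmetric])
  next
    fix X :: "real^'n^'n"
    show "linear (\<lambda>Y. trace (X ** Y))"
      by (rule linearI)
        (simp_all add: matrix_add_ldistrib trace_add trace_scaleR matrix_scalar_ac
          scalar_matrix_assoc[symmetric])
  qed
  then show ?thesis by (simp add: bilinear_conv_bounded_bilinear)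
qed

lemma has_vector_derivative_trace_matrix_mult:
  fixes Q P :: "real \<Rightarrow> real^'n^'n"
  assumes "(Q has_vector_derivative Q') (at t within S)"
    and "(P has_vector_derivative P') (at t within S)"
  shows "((\<lambda>t. trace (Q t ** P t)) has_vector_derivative
           trace (Q t ** P') + trace (Q' ** P t)) (at t within S)"
  using bounded_bilinear.has_vector_derivative[OF bounded_bilinear_trace_matrix_mult assms] .

lemma continuous_on_trace_matrix_mult:
  fixes Q P :: "real \<Rightarrow> real^'n^'n"
  assumes "continuous_on S Q" and "continuous_on S P"
  shows "continuous_on S (\<lambda>t. trace (Q t ** P t))"
  using bounded_bilinear.continuous_on[OF bounded_bilinear_trace_matrix_mult assms] .

lemma trace_lyapunov_pair_identity:
  fixes A P Q :: "real^'n^'n" and B :: "real^'m^'n" and C :: "real^'n^'k"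
  shows "trace (Q ** (A ** P + P ** transpose A + a *\<^sub>R P + (1 / a) *\<^sub>R (B ** transpose B)))
       + trace (- (Q ** A + transpose A ** Q + a *\<^sub>R Q + transpose C ** C) ** P)
       = trace (transpose B ** Q ** B) / a - trace (C ** P ** transpose C)"
proof -
  have cyclic: "trace (transpose A ** Q ** P) = trace (Q ** P ** transpose A)"
    "trace (transpose C ** C ** P) = trace (C ** P ** transpose C)"
    "trace (Q ** B ** transpose B) = trace (transpose B ** Q ** B)"
    by (metis matrix_mul_assoc trace_mul_sym)+
  show ?thesis
    by (simp add: matrix_add_ldistrib matrix_add_rdistrib matrix_diff_rdistrib matrix_uminus_left
        trace_add trace_sub trace_uminus trace_scaleR matrix_scalar_ac scalar_matrix_assoc[symmetric]
        matrix_mul_assoc cyclic)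
qed

lemma integral_eq_if_diff_has_integral_0:
  assumes "((\<lambda>x. f x - g x) has_integral 0) S"
  shows "integral S f = integral S (g :: 'a::euclidean_space \<Rightarrow> real)"
proof -
  have diff: "(\<lambda>x. f x - g x) integrable_on S"
    using assms by blast
  have integrable_iff: "f integrable_on S \<longleftrightarrow> g integrable_on S"
  proof
    assume "f integrable_on S"
    from integrable_diff[OF this diff] show "g integrable_on S" by simp
  next
    assume "g integrable_on S"
    from integrable_add[OF diff this] show "f integrable_on S" by simp
  qed
  moreover have "integral S f - integral S g = 0" if "g integrable_on S"
    using integral_diff[OF _ that, of f] integral_unique[OF assms] integrable_iff that
    by simp
  ultimately show ?thesis
    by (cases "g integrable_on S") (auto simp: not_integrable_integral)
qed

theorem theorem2:
  fixes A :: "real \<Rightarrow> real^'n^'n" and B :: "real \<Rightarrow> real^'m^'n"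
    and C :: "real \<Rightarrow> real^'n^'k" and \<alpha> :: "real \<Rightarrow> real"
    and P Q :: "real \<Rightarrow> real^'n^'n" and T :: real
  assumes T: "T > 0"
    and pwA: "pw_continuous A" and pwB: "pw_continuous B" and pwC: "pw_continuous C"
    and perA: "periodic T A" and perB: "periodic T B" and perC: "periodic T C"
    and ctrb: "controllable A B" and obsv: "observable C A"
    and alpha_pos: "\<And>t. \<alpha> t > 0" and per_alpha: "periodic T \<alpha>"
    and perP: "periodic T P" and posP: "\<And>t. pos_def (P t)"
    and odeP: "solves_ode P (\<lambda>t X. A t ** X + X ** transpose (A t) + \<alpha> t *\<^sub>R X
                                    + (1 / \<alpha> t) *\<^sub>R (B t ** transpose (B t)))"
    and perQ: "periodic T Q" and posQ: "\<And>t. pos_def (Q t)"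
    and odeQ: "solves_ode Q (\<lambda>t X. - (X ** A t + transpose (A t) ** X + \<alpha> t *\<^sub>R X
                                    + transpose (C t) ** C t))"
  shows "ellipsoid_size T C P =
           (1 / T) * integral {0..T} (\<lambda>t. trace (transpose (B t) ** Q t ** B t) / \<alpha> t)"
proof -
  define f where "f t = trace (Q t ** P t)" for t
  obtain SP SQ where "finite SP" "finite SQ"
    and dP: "\<forall>t\<in>{0..T} - SP. (P has_vector_derivative
      A t ** P t + P t ** transpose (A t) + \<alpha> t *\<^sub>R P t
        + (1 / \<alpha> t) *\<^sub>R (B t ** transpose (B t))) (at t)"
    and dQ: "\<forall>t\<in>{0..T} - SQ. (Q has_vector_derivative
      - (Q t ** A t + transpose (A t) ** Q t + \<alpha> t *\<^sub>R Q t + transpose (C t) ** C t)) (at t)"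
    using odeP odeQ unfolding solves_ode_def by meson
  have "(f has_vector_derivative trace (transpose (B t) ** Q t ** B t) / \<alpha> t
          - trace (C t ** P t ** transpose (C t))) (at t)"
    if "t \<in> {0<..<T} - (SP \<union> SQ)" for t
    using has_vector_derivative_trace_matrix_mult[OF dQ[rule_format] dP[rule_format], of t] that
    unfolding f_def trace_lyapunov_pair_identity by auto
  moreover have "continuous_on {0..T} f"
    using odeP odeQ unfolding f_def solves_ode_def
    by (auto intro: continuous_on_trace_matrix_mult continuous_on_subset)
  ultimately have "((\<lambda>t. trace (transpose (B t) ** Q t ** B t) / \<alpha> t
                     - trace (C t ** P t ** transpose (C t))) has_integral f T - f 0) {0..T}"
    using \<open>finite SP\<close> \<open>finite SQ\<close> T
    by (intro fundamental_theorem_of_calculus_interior_strong[of "SP \<union> SQ"]) auto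
  moreover have "f T = f 0"
    using perP perQ unfolding f_def periodic_def by (metis add_0)
  ultimately show ?thesis
    unfolding ellipsoid_size_def by (simp add: integral_eq_if_diff_has_integral_0)
qed

end
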